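(* Let $\Omega=\{\omega_1,\dots,\omega_n\}$ be a finite set of bids, let $u:\Omega\to[0,1]$ be a utility function, let $a:\Omega\to[0,1]$ be a (static) acceptance-probability function, let $\mathit{rv}$ be a real number (the reservation value), and let $D\le n$ be a positive integer (the deadline). For a finite sequence $\pi=(x_1,\dots,x_k)$ of elements of $\Omega$, writing $u_i=u(x_i)$ and $a_i=a(x_i)$, define $$EU_{\mathit{rv}}(\pi)=\sum_{i=1}^{k} u_i\, a_i\prod_{j=1}^{i-1}(1-a_j)+\mathit{rv}\cdot\prod_{j=1}^{k}(1-a_j).$$ Consider the algorithm MIA-RVelous: for $k=1,\dots,D$ in turn, choose $$x_k\in\operatorname{argmax}_{\omega\in\Omega\setminus\{x_1,\dots,x_{k-1}\}} EU_{\mathit{rv}}\big(\mathrm{sort}(\{x_1,\dots,x_{k-1},\omega\})\big),$$ and finally output $\pi^*=\mathrm{sort}(\{x_1,\dots,x_D\})$, where $\mathrm{sort}(S)$ denotes the sequence of the elements of a set $S\subseteq\Omega$ arranged in order of decreasing utility $u$. Then the output $\pi^*$ is an optimal bid sequence, i.e. $$\pi^*\in\operatorname{argmax}_{\pi\in\Omega^{D}} EU_{\mathit{rv}}(\pi).$$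
   Context: Setting: bilateral negotiation under the alternating offers protocol, from the perspective of one agent who plans a whole sequence of bids $\pi=(x_1,\dots,x_k)$ in advance. Each bid $x_i$ is accepted by the opponent with probability $a(x_i)$, independently of time (static acceptance model); if accepted the agent receives utility $u(x_i)$, and if all bids are rejected by the deadline $D$ the agent receives the reservation value $\mathit{rv}$. $EU_{\mathit{rv}}(\pi)$ is the resulting expected utility. $\Omega^D$ is the set of all sequences of length $D$ of elements of $\Omega$. *)

theory Defs
  imports Complex_Main
begin

definition EU :: "real \<Rightarrow> ('a \<Rightarrow> real) \<Rightarrow> ('a \<Rightarrow> real) \<Rightarrow> 'a list \<Rightarrow> real" where
  "EU rv u a xs =
     (\<Sum>i<length xs. u (xs ! i) * a (xs ! i) * (\<Prod>j<i. 1 - a (xs ! j)))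
     + rv * (\<Prod>j<length xs. 1 - a (xs ! j))"

text \<open>Elements of a finite set arranged in order of decreasing utility
  (ties broken by the underlying linear order; ties do not affect EU).\<close>
definition sort_dec :: "('a::linorder \<Rightarrow> real) \<Rightarrow> 'a set \<Rightarrow> 'a list" where
  "sort_dec u S = sort_key (\<lambda>x. - u x) (sorted_list_of_set S)"

definition mia_run :: "'a::linorder set \<Rightarrow> ('a \<Rightarrow> real) \<Rightarrow> ('a \<Rightarrow> real) \<Rightarrow> real \<Rightarrow> nat \<Rightarrow> 'a list \<Rightarrow> bool" where
  "mia_run \<Omega> u a rv D xs \<longleftrightarrow>
     length xs = D \<and>
     (\<forall>k<D. xs ! k \<in> \<Omega> - set (take k xs) \<and>
        (\<forall>\<omega>\<in>\<Omega> - set (take k xs).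
           EU rv u a (sort_dec u (insert \<omega> (set (take k xs))))
             \<le> EU rv u a (sort_dec u (insert (xs ! k) (set (take k xs))))))"

end

theory Submission
  imports Defs "HOL-Library.Multiset"
begin

text \<open>With \<open>EU_step x z = u x * a x + (1 - a x) * z\<close>, the expected utility of a list is a
  right fold of \<open>EU_step\<close>. Swapping two adjacent bids into decreasing order of utility never
  decreases it, and bids of equal utility commute, so an optimal sequence may be taken to be a set
  sorted by decreasing utility.

  Greedy optimality then rests on an exchange property: if \<open>S\<close> is an optimal \<open>k\<close>-subset of
  \<open>U\<close>, every \<open>(k+1)\<close>-subset of \<open>U\<close> is beaten by some one-element extension of \<open>S\<close>. It is
  proved by induction on \<open>U\<close>, removing the bid \<open>e\<close> of highest utility, which is always offered
  first. If \<open>e \<in> S\<close> and \<open>a e < 1\<close>, then \<open>S - {e}\<close> is optimal in \<open>U - {e}\<close>; when in addition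
  \<open>T\<close> avoids \<open>e\<close>, the induction hypothesis applied to the best one-element extension of
  \<open>S - {e}\<close> leaves a three-bid exchange inequality.\<close>

definition EU_step :: "('a \<Rightarrow> real) \<Rightarrow> ('a \<Rightarrow> real) \<Rightarrow> 'a \<Rightarrow> real \<Rightarrow> real" where
  "EU_step u a x z = u x * a x + (1 - a x) * z"

lemma EU_Nil [simp]: "EU rv u a [] = rv"
  by (simp add: EU_def)

lemma EU_Cons [simp]: "EU rv u a (x # xs) = EU_step u a x (EU rv u a xs)"
proof -
  have prod_Cons: "(\<Prod>j<Suc i. 1 - a ((x # xs) ! j)) = (1 - a x) * (\<Prod>j<i. 1 - a (xs ! j))"
    for i by (simp only: prod.lessThan_Suc_shift) simp
  have sum_Cons:
    "(\<Sum>i<length (x # xs). u ((x # xs) ! i) * a ((x # xs) ! i) * (\<Prod>j<i. 1 - a ((x # xs) ! j)))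
     = u x * a x + (1 - a x) * (\<Sum>i<length xs. u (xs ! i) * a (xs ! i) * (\<Prod>j<i. 1 - a (xs ! j)))"
    by (simp only: length_Cons sum.lessThan_Suc_shift prod_Cons) (simp add: sum_distrib_left mult_ac)
  show ?thesis
    unfolding EU_def sum_Cons unfolding length_Cons prod_Cons EU_step_def by (simp add: algebra_simps)
qed

lemma EU_step_commute:
  "u x = u y \<Longrightarrow> EU_step u a x (EU_step u a y z) = EU_step u a y (EU_step u a x z)"
  by (simp add: EU_step_def algebra_simps)

lemma EU_step_mono: "a x \<le> 1 \<Longrightarrow> z \<le> z' \<Longrightarrow> EU_step u a x z \<le> EU_step u a x z'"
  by (simp add: EU_step_def mult_left_mono)

lemma EU_step_le_cancel: "a x < 1 \<Longrightarrow> EU_step u a x z \<le> EU_step u a x z' \<Longrightarrow> z \<le> z'"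
  by (simp add: EU_step_def)

lemma EU_step_le_bound:
  assumes "0 \<le> a x" "a x \<le> 1" "u x \<le> c" "z \<le> c"
  shows "EU_step u a x z \<le> c"
proof -
  have "u x * a x + (1 - a x) * z \<le> c * a x + (1 - a x) * c"
    using assms by (intro add_mono mult_right_mono mult_left_mono) auto
  then show ?thesis by (simp add: EU_step_def algebra_simps)
qed

lemma EU_step_swap_le:
  assumes "0 \<le> a x" "0 \<le> a y" "u x \<le> u y"
  shows "EU_step u a x (EU_step u a y z) \<le> EU_step u a y (EU_step u a x z)"
proof -
  have "EU_step u a y (EU_step u a x z) - EU_step u a x (EU_step u a y z) = a x * a y * (u y - u x)"
    by (simp add: EU_step_def algebra_simps)
  moreover have "0 \<le> a x * a y * (u y - u x)"
    using assms by simp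
  ultimately show ?thesis by linarith
qed

abbreviation insort_dec :: "('a \<Rightarrow> real) \<Rightarrow> 'a \<Rightarrow> 'a list \<Rightarrow> 'a list" where
  "insort_dec u \<equiv> insort_key (\<lambda>y. - u y)"

lemma EU_Cons_le_EU_insort:
  assumes "0 \<le> a x" "\<forall>y\<in>set ys. 0 \<le> a y \<and> a y \<le> 1"
  shows "EU rv u a (x # ys) \<le> EU rv u a (insort_dec u x ys)"
  using assms(2)
proof (induction ys)
  case Nil
  then show ?case by simp
next
  case (Cons y ys)
  show ?case
  proof (cases "u y \<le> u x")
    case True
    then show ?thesis by simp
  next
    case False
    have y: "0 \<le> a y" "a y \<le> 1" using Cons.prems by auto
    have "EU rv u a (x # y # ys) \<le> EU_step u a y (EU_step u a x (EU rv u a ys))"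
      using EU_step_swap_le[of a x y u] False assms(1) y by simp
    also have "\<dots> \<le> EU_step u a y (EU rv u a (insort_dec u x ys))"
      using Cons y by (intro EU_step_mono) auto
    also have "\<dots> = EU rv u a (insort_dec u x (y # ys))"
      using False by simp
    finally show ?thesis .
  qed
qed

lemma EU_le_EU_sort_key:
  assumes "\<forall>y\<in>set xs. 0 \<le> a y \<and> a y \<le> 1"
  shows "EU rv u a xs \<le> EU rv u a (sort_key (\<lambda>y. - u y) xs)"
  using assms
proof (induction xs)
  case Nil
  then show ?case by simp
next
  case (Cons x xs)
  have "EU rv u a (x # xs) \<le> EU rv u a (x # sort_key (\<lambda>y. - u y) xs)"
    using Cons by (simp add: EU_step_mono)
  also have "\<dots> \<le> EU rv u a (insort_dec u x (sort_key (\<lambda>y. - u y) xs))"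
    using Cons.prems by (intro EU_Cons_le_EU_insort) auto
  finally show ?case by simp
qed

lemma EU_eq_if_sorted_mset_eq:
  assumes "sorted (map (\<lambda>x. - u x) xs)" "sorted (map (\<lambda>x. - u x) ys)" "mset xs = mset ys"
  shows "EU rv u a xs = EU rv u a ys"
  using assms
proof (induction xs arbitrary: ys)
  case Nil
  then show ?case by simp
next
  case (Cons x xs)
  have "x \<in> set ys" using Cons.prems(3) by (metis list.set_intros(1) set_mset_mset)
  then obtain ps qs where ys: "ys = ps @ x # qs"
    using split_list by metis
  have ties: "\<forall>p\<in>set ps. u p = u x"
  proof
    fix p assume p: "p \<in> set ps"
    have "u x \<le> u p" using Cons.prems(2) p unfolding ys by (auto simp: sorted_append)
    moreover have "p \<in> set (x # xs)" using p Cons.prems(3) unfolding ys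
      by (metis Un_iff set_append set_mset_mset)
    then have "u p \<le> u x" using Cons.prems(1) by auto
    ultimately show "u p = u x" by simp
  qed
  have "EU rv u a ys = EU rv u a (x # ps @ qs)"
    unfolding ys using ties by (induction ps) (auto simp: EU_step_commute)
  also have "\<dots> = EU rv u a (x # xs)"
    using Cons.IH[of "ps @ qs"] Cons.prems unfolding ys by (simp add: sorted_append)
  finally show ?case by simp
qed

lemma EU_insort_max:
  assumes "\<forall>y\<in>set xs. u y \<le> u e"
  shows "EU rv u a (insort_dec u e xs) = EU_step u a e (EU rv u a xs)"
  using assms by (cases xs) auto

lemma EU_insort_insort_gain:
  assumes "u l \<le> u h"
  shows "EU rv u a (insort_dec u h (insort_dec u l xs)) - EU rv u a (insort_dec u h xs)
         = (1 - a h) * (EU rv u a (insort_dec u l xs) - EU rv u a xs)"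
proof (induction xs)
  case Nil
  show ?case using assms by (simp add: EU_step_def algebra_simps)
next
  case (Cons y ys)
  consider "u y \<le> u l" | "u l < u y" "u y \<le> u h" | "u h < u y"
    using assms by linarith
  then show ?case
  proof cases
    case 3
    have "EU rv u a (insort_dec u h (insort_dec u l (y # ys))) - EU rv u a (insort_dec u h (y # ys))
        = (1 - a y) * (EU rv u a (insort_dec u h (insort_dec u l ys)) - EU rv u a (insort_dec u h ys))"
      using 3 assms by (simp add: EU_step_def algebra_simps)
    also have "\<dots> = (1 - a y) * ((1 - a h) * (EU rv u a (insort_dec u l ys) - EU rv u a ys))"
      using Cons.IH by simp
    also have "\<dots> = (1 - a h) * (EU rv u a (insort_dec u l (y # ys)) - EU rv u a (y # ys))"
      using 3 assms by (simp add: EU_step_def algebra_simps)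
    finally show ?thesis .
  qed (use assms in \<open>auto simp: EU_step_def algebra_simps\<close>)
qed

lemma EU_insort_gain_le:
  assumes "0 \<le> a h" "u h \<le> v" "\<forall>y\<in>set xs. 0 \<le> a y \<and> a y \<le> 1 \<and> u y \<le> v"
  shows "EU rv u a (insort_dec u h xs) - EU rv u a xs \<le> a h * (v - EU rv u a xs)"
proof -
  have top_gain: "a h * u h \<le> a h * v" using assms(1,2) by (simp add: mult_left_mono)
  show ?thesis
    using assms(3)
  proof (induction xs)
    case Nil
    show ?case using top_gain by (simp add: EU_step_def algebra_simps)
  next
    case (Cons y ys)
    show ?case
    proof (cases "u y \<le> u h")
      case True
      then show ?thesis using top_gain by (simp add: EU_step_def algebra_simps)
    next
      case False
      have y: "0 \<le> a y" "a y \<le> 1" "u y \<le> v" using Cons.prems by auto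
      have "EU rv u a (insort_dec u h (y # ys)) - EU rv u a (y # ys)
          = (1 - a y) * (EU rv u a (insort_dec u h ys) - EU rv u a ys)"
        using False by (simp add: EU_step_def algebra_simps)
      also have "\<dots> \<le> (1 - a y) * (a h * (v - EU rv u a ys))"
        using Cons y by (simp add: mult_left_mono)
      also have "\<dots> = a h * (v - EU rv u a (y # ys)) - a h * (a y * (v - u y))"
        by (simp add: EU_step_def algebra_simps)
      also have "\<dots> \<le> a h * (v - EU rv u a (y # ys))"
        using y assms(1) by simp
      finally show ?thesis .
    qed
  qed
qed

definition EU_set :: "real \<Rightarrow> ('a::linorder \<Rightarrow> real) \<Rightarrow> ('a \<Rightarrow> real) \<Rightarrow> 'a set \<Rightarrow> real" where
  "EU_set rv u a S = EU rv u a (sort_dec u S)"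

lemma set_sort_dec [simp]: "finite S \<Longrightarrow> set (sort_dec u S) = S"
  by (simp add: sort_dec_def)

lemma length_sort_dec [simp]: "length (sort_dec u S) = card S"
  by (simp add: sort_dec_def)

lemma EU_set_eq_EU_sorted:
  assumes "distinct xs" "sorted (map (\<lambda>y. - u y) xs)"
  shows "EU_set rv u a (set xs) = EU rv u a xs"
  unfolding EU_set_def
proof (rule EU_eq_if_sorted_mset_eq)
  show "mset (sort_dec u (set xs)) = mset xs"
    using assms(1) by (simp add: sort_dec_def set_eq_iff_mset_eq_distinct[symmetric])
qed (simp_all add: sort_dec_def assms(2))

lemma EU_set_eq_EU_sort_key:
  "distinct xs \<Longrightarrow> EU_set rv u a (set xs) = EU rv u a (sort_key (\<lambda>y. - u y) xs)"
  using EU_set_eq_EU_sorted[of "sort_key (\<lambda>y. - u y) xs"] by simp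

lemma EU_set_insert:
  assumes "finite B" "x \<notin> B"
  shows "EU_set rv u a (insert x B) = EU rv u a (insort_dec u x (sort_dec u B))"
  using EU_set_eq_EU_sorted[of "insort_dec u x (sort_dec u B)"] assms
  by (simp add: distinct_insort set_insort_key sorted_insort_key sort_dec_def)

lemma EU_set_insert_insert:
  assumes "finite B" "x \<notin> B" "y \<notin> B" "x \<noteq> y"
  shows "EU_set rv u a (insert x (insert y B))
       = EU rv u a (insort_dec u x (insort_dec u y (sort_dec u B)))"
  using EU_set_eq_EU_sorted[of "insort_dec u x (insort_dec u y (sort_dec u B))"] assms
  by (simp add: distinct_insort set_insort_key sorted_insort_key sort_dec_def)

lemma EU_set_insert_max:
  assumes "finite B" "e \<notin> B" "\<forall>y\<in>B. u y \<le> u e"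
  shows "EU_set rv u a (insert e B) = EU_step u a e (EU_set rv u a B)"
  using EU_set_insert[OF assms(1,2)] assms by (simp add: EU_insort_max EU_set_def)

lemma finite_ex_max_image:
  fixes f :: "'a \<Rightarrow> 'b::linorder"
  assumes "finite A" "A \<noteq> {}"
  obtains x where "x \<in> A" "\<forall>y\<in>A. f y \<le> f x"
proof -
  have "Max (f ` A) \<in> f ` A" using assms by simp
  then obtain x where "x \<in> A" "f x = Max (f ` A)" by auto
  moreover have "\<forall>y\<in>A. f y \<le> Max (f ` A)" using assms(1) by simp
  ultimately show ?thesis using that by auto
qed

text \<open>Inserting \<open>h\<close> above \<open>l\<close> scales the gain of \<open>l\<close> by \<open>1 - a h\<close>, and the gain of \<open>h\<close>
  is at most \<open>a h\<close> times the headroom \<open>u e - EU B\<close>; the top bid \<open>e\<close> gains exactly \<open>a e\<close>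
  times that headroom, which pays for both.\<close>
lemma EU_set_exchange:
  assumes "finite B" "e \<notin> B" "h \<notin> B" "l \<notin> B" "e \<noteq> h" "e \<noteq> l" "h \<noteq> l"
    and "\<forall>y\<in>B. 0 \<le> a y \<and> a y \<le> 1 \<and> u y \<le> u e"
    and "u l \<le> u h" "u h \<le> u e" "0 \<le> a e" "0 \<le> a h" "a h \<le> 1"
    and "EU_set rv u a (insert l B) \<le> EU_set rv u a (insert e B)"
  shows "EU_set rv u a (insert h (insert l B)) \<le> EU_set rv u a (insert e (insert h B))"
proof -
  define xs where "xs = sort_dec u B"
  define E0 where "E0 = EU rv u a xs"
  define El where "El = EU rv u a (insort_dec u l xs)"
  define Eh where "Eh = EU rv u a (insort_dec u h xs)"
  define Ehl where "Ehl = EU rv u a (insort_dec u h (insort_dec u l xs))"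
  define K where "K = a e * (u e - E0)"
  have F_e: "EU_set rv u a (insert e B) = EU_step u a e E0"
    using EU_set_insert_max[of B e u rv a] assms by (simp add: E0_def EU_set_def xs_def)
  have F_l: "EU_set rv u a (insert l B) = El"
    using assms by (simp add: EU_set_insert El_def xs_def)
  have F_h: "EU_set rv u a (insert h B) = Eh"
    using assms by (simp add: EU_set_insert Eh_def xs_def)
  have F_hl: "EU_set rv u a (insert h (insert l B)) = Ehl"
    using assms by (simp add: EU_set_insert_insert Ehl_def xs_def)
  have F_eh: "EU_set rv u a (insert e (insert h B)) = EU_step u a e Eh"
    using assms F_h by (subst EU_set_insert_max) auto
  have gain_l: "El - E0 \<le> K"
    using assms(14) F_e F_l by (simp add: K_def EU_step_def algebra_simps)
  have "Eh - E0 \<le> a h * (u e - E0)"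
    unfolding Eh_def E0_def using assms(1,8,10,12) by (intro EU_insort_gain_le) (auto simp: xs_def)
  from mult_left_mono[OF this assms(11)]
  have gain_h: "a e * (Eh - E0) \<le> a h * K"
    by (simp add: K_def algebra_simps)
  have "Ehl = Eh + (1 - a h) * (El - E0)"
    using EU_insort_insort_gain[of u l h rv a xs] assms(9) by (simp add: Ehl_def Eh_def El_def E0_def)
  also have "\<dots> \<le> Eh + (1 - a h) * K"
    using gain_l assms(13) by (simp add: mult_left_mono)
  also have "\<dots> \<le> EU_step u a e Eh"
    using gain_h by (simp add: K_def EU_step_def algebra_simps)
  finally show ?thesis using F_hl F_eh by simp
qed

lemma EU_set_exchange_pair:
  assumes "finite B" "e \<notin> B" "q \<notin> B" "r \<notin> B" "e \<noteq> q" "e \<noteq> r" "q \<noteq> r"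
    and "\<forall>y\<in>B \<union> {q, r}. 0 \<le> a y \<and> a y \<le> 1 \<and> u y \<le> u e" "0 \<le> a e"
    and "EU_set rv u a (insert q B) \<le> EU_set rv u a (insert e B)"
    and "EU_set rv u a (insert r B) \<le> EU_set rv u a (insert e B)"
  shows "\<exists>h\<in>{q, r}. EU_set rv u a (insert r (insert q B)) \<le> EU_set rv u a (insert e (insert h B))"
proof (cases "u r \<le> u q")
  case True
  then show ?thesis
    using EU_set_exchange[of B e q r a u rv] assms by (simp add: insert_commute)
next
  case False
  then show ?thesis
    using EU_set_exchange[of B e r q a u rv] assms by (simp add: insert_commute)
qed

lemma EU_set_le_if_remove_max_le:
  assumes "finite T" "t \<in> T" "\<forall>y\<in>T. u y \<le> u t" "0 \<le> a t" "a t \<le> 1" "u t \<le> c"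
    and "EU_set rv u a (T - {t}) \<le> c"
  shows "EU_set rv u a T \<le> c"
proof -
  have "EU_set rv u a T = EU_step u a t (EU_set rv u a (T - {t}))"
    using EU_set_insert_max[of "T - {t}" t u rv a] assms(1-3) by (simp add: insert_absorb)
  then show ?thesis using assms(4-7) EU_step_le_bound by metis
qed

definition opt_subset :: "real \<Rightarrow> ('a::linorder \<Rightarrow> real) \<Rightarrow> ('a \<Rightarrow> real) \<Rightarrow> 'a set \<Rightarrow> nat \<Rightarrow> 'a set \<Rightarrow> bool" where
  "opt_subset rv u a U k S \<longleftrightarrow> S \<subseteq> U \<and> card S = k \<and>
     (\<forall>R\<subseteq>U. card R = k \<longrightarrow> EU_set rv u a R \<le> EU_set rv u a S)"

definition exchange_prop :: "real \<Rightarrow> ('a::linorder \<Rightarrow> real) \<Rightarrow> ('a \<Rightarrow> real) \<Rightarrow> 'a set \<Rightarrow> bool" where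
  "exchange_prop rv u a U \<longleftrightarrow> (\<forall>k S T. opt_subset rv u a U k S \<longrightarrow> T \<subseteq> U \<longrightarrow> card T = Suc k \<longrightarrow>
     (\<exists>w\<in>U - S. EU_set rv u a T \<le> EU_set rv u a (insert w S)))"

lemma opt_subset_insert_argmax:
  assumes "finite U" "exchange_prop rv u a U" "opt_subset rv u a U k S" "q \<in> U - S"
    and "\<forall>w\<in>U - S. EU_set rv u a (insert w S) \<le> EU_set rv u a (insert q S)"
  shows "opt_subset rv u a U (Suc k) (insert q S)"
  unfolding opt_subset_def
proof (intro conjI allI impI)
  have "S \<subseteq> U" "card S = k" using assms(3) by (auto simp: opt_subset_def)
  then show "insert q S \<subseteq> U" "card (insert q S) = Suc k"
    using assms(1,4) by (auto simp: finite_subset)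
  fix R assume "R \<subseteq> U" "card R = Suc k"
  then obtain w where "w \<in> U - S" "EU_set rv u a R \<le> EU_set rv u a (insert w S)"
    using assms(2,3) unfolding exchange_prop_def by blast
  with assms(5) show "EU_set rv u a R \<le> EU_set rv u a (insert q S)" by force
qed

lemma opt_subset_remove_max:
  assumes "finite U" "opt_subset rv u a U k S" "e \<in> S" "\<forall>y\<in>U. u y \<le> u e" "a e < 1"
  shows "opt_subset rv u a (U - {e}) (k - 1) (S - {e})"
  unfolding opt_subset_def
proof (intro conjI allI impI)
  have S: "S \<subseteq> U" "card S = k" "finite S"
    using assms(1,2) by (auto simp: opt_subset_def finite_subset)
  then show "S - {e} \<subseteq> U - {e}" "card (S - {e}) = k - 1"
    using assms(3) by auto
  have top: "EU_set rv u a (insert e X) = EU_step u a e (EU_set rv u a X)" if "X \<subseteq> U - {e}" for X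
    using that assms(1,4) by (intro EU_set_insert_max) (auto simp: finite_subset)
  fix R assume R: "R \<subseteq> U - {e}" "card R = k - 1"
  have "finite R" "e \<notin> R" "0 < k"
    using R S assms(1,3) by (auto simp: finite_subset card_gt_0_iff)
  then have "card (insert e R) = k"
    using R(2) by simp
  moreover have "insert e R \<subseteq> U"
    using R S(1) assms(3) by auto
  ultimately have "EU_set rv u a (insert e R) \<le> EU_set rv u a S"
    using assms(2) by (simp add: opt_subset_def)
  moreover have "EU_set rv u a S = EU_step u a e (EU_set rv u a (S - {e}))"
    using top[of "S - {e}"] S(1) assms(3) by (auto simp: insert_absorb)
  ultimately have "EU_step u a e (EU_set rv u a R) \<le> EU_step u a e (EU_set rv u a (S - {e}))"
    using top[of R] R(1) by simp
  then show "EU_set rv u a R \<le> EU_set rv u a (S - {e})"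
    by (rule EU_step_le_cancel[of a e, OF assms(5)])
qed

context
  fixes rv :: real and u a :: "'a::linorder \<Rightarrow> real" and A S T :: "'a set" and e :: 'a and k :: nat
  assumes fin: "finite A" and e_in: "e \<in> A" and e_max: "\<forall>y\<in>A. u y \<le> u e"
    and bounds: "\<forall>y\<in>A. 0 \<le> a y \<and> a y \<le> 1"
    and opt: "opt_subset rv u a A k S" and T_sub: "T \<subseteq> A" and card_T: "card T = Suc k"
begin

private abbreviation F where "F \<equiv> EU_set rv u a"

private lemma S_sub: "S \<subseteq> A" and card_S: "card S = k" and S_max: "\<And>R. R \<subseteq> A \<Longrightarrow> card R = k \<Longrightarrow> F R \<le> F S"
  using opt by (auto simp: opt_subset_def)

private lemma F_insert_top: "X \<subseteq> A \<Longrightarrow> e \<notin> X \<Longrightarrow> F (insert e X) = EU_step u a e (F X)"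
  using fin e_max by (intro EU_set_insert_max) (auto simp: finite_subset)

lemma exchange_if_top_notin_S:
  assumes "exchange_prop rv u a (A - {e})" "e \<notin> S"
  shows "\<exists>w\<in>A - S. F T \<le> F (insert w S)"
proof (cases "e \<in> T")
  case True
  have "F T = EU_step u a e (F (T - {e}))"
    using F_insert_top[of "T - {e}"] T_sub True by (auto simp: insert_absorb)
  also have "\<dots> \<le> EU_step u a e (F S)"
    using S_max[of "T - {e}"] T_sub card_T True bounds e_in by (intro EU_step_mono) auto
  also have "\<dots> = F (insert e S)"
    using F_insert_top S_sub assms(2) by simp
  finally show ?thesis using e_in assms(2) by blast
next
  case False
  have "opt_subset rv u a (A - {e}) k S" "T \<subseteq> A - {e}"
    using opt assms(2) T_sub False by (auto simp: opt_subset_def)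
  then obtain w where "w \<in> A - {e} - S" "F T \<le> F (insert w S)"
    using assms(1) card_T unfolding exchange_prop_def by blast
  then show ?thesis by blast
qed

lemma exchange_if_top_certain:
  assumes "e \<in> S" "a e = 1"
  shows "\<exists>w\<in>A - S. F T \<le> F (insert w S)"
proof -
  have certain: "F (insert e X) = u e" if "X \<subseteq> A" "e \<notin> X" for X
    using F_insert_top[OF that] assms(2) by (simp add: EU_step_def)
  have fin_T: "finite T" and fin_S: "finite S"
    using fin T_sub S_sub by (auto intro: finite_subset)
  have "\<not> T \<subseteq> S"
    using card_mono[OF fin_S, of T] card_S card_T Suc_n_not_le_n by metis
  then obtain w where w: "w \<in> T" "w \<notin> S" by blast
  obtain t where t: "t \<in> T" "\<forall>y\<in>T. u y \<le> u t"
    using finite_ex_max_image[OF fin_T, of u] w(1) by blast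
  have "S - {e} \<subseteq> A" using S_sub by blast
  from certain[OF this] have F_S: "F S = u e"
    using assms(1) by (simp add: insert_absorb)
  have "F (T - {t}) \<le> F S"
    by (rule S_max) (use T_sub card_T fin_T t(1) in auto)
  also note F_S
  finally have "F T \<le> u e"
    using EU_set_le_if_remove_max_le[OF fin_T t] bounds e_max t(1) T_sub by blast
  also have "u e = F (insert e (insert w (S - {e})))"
    using w S_sub T_sub assms(1) by (intro certain[symmetric]) auto
  also have "insert e (insert w (S - {e})) = insert w S"
    using assms(1) by blast
  finally show ?thesis using w T_sub by blast
qed

lemma exchange_if_top_in_S_and_T:
  assumes "exchange_prop rv u a (A - {e})" "e \<in> S" "a e < 1" "e \<in> T"
  shows "\<exists>w\<in>A - S. F T \<le> F (insert w S)"
proof -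
  have fin_S: "finite S" using fin S_sub by (rule finite_subset[rotated])
  have "0 < k" using card_S fin_S assms(2) card_gt_0_iff by blast
  then have "card (T - {e}) = Suc (k - 1)" using card_T assms(4) by simp
  moreover have "opt_subset rv u a (A - {e}) (k - 1) (S - {e})"
    using opt_subset_remove_max[OF fin opt assms(2) e_max assms(3)] .
  moreover have "T - {e} \<subseteq> A - {e}" using T_sub by blast
  ultimately obtain w where w: "w \<in> A - {e} - (S - {e})" "F (T - {e}) \<le> F (insert w (S - {e}))"
    using assms(1) unfolding exchange_prop_def by blast
  have "F T = EU_step u a e (F (T - {e}))"
    using F_insert_top[of "T - {e}"] T_sub assms(4) by (auto simp: insert_absorb)
  also have "\<dots> \<le> EU_step u a e (F (insert w (S - {e})))"
    using w(2) bounds e_in by (intro EU_step_mono) auto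
  also have "\<dots> = F (insert e (insert w (S - {e})))"
    using w(1) S_sub by (intro F_insert_top[symmetric]) auto
  also have "insert e (insert w (S - {e})) = insert w S"
    using assms(2) by blast
  finally show ?thesis using w(1) by blast
qed

lemma exchange_if_top_in_S_notin_T:
  assumes "exchange_prop rv u a (A - {e})" "e \<in> S" "a e < 1" "e \<notin> T"
  shows "\<exists>w\<in>A - S. F T \<le> F (insert w S)"
proof -
  define U where "U = A - {e}"
  define S' where "S' = S - {e}"
  have fin_U: "finite U" and fin_S': "finite S'"
    using fin S_sub by (auto simp: U_def S'_def intro: finite_subset)
  have S_eq: "S = insert e S'" "e \<notin> S'" using assms(2) by (auto simp: S'_def)
  have T_sub_U: "T \<subseteq> U" using T_sub assms(4) by (auto simp: U_def)
  have opt_S': "opt_subset rv u a U (k - 1) S'"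
    unfolding U_def S'_def using opt_subset_remove_max[OF fin opt assms(2) e_max assms(3)] .
  have k_pos: "0 < k" using card_S S_eq fin_S' by simp
  have below_S: "F (insert w S') \<le> F S" if "w \<in> U - S'" for w
    using that S_sub S_eq fin_S' card_S by (intro S_max) (auto simp: U_def)
  have "card S' < card T" using card_S S_eq fin_S' card_T by simp
  then have "\<not> T \<subseteq> S'" using card_mono[OF fin_S', of T] by (meson leD)
  then have "U - S' \<noteq> {}" using T_sub_U by blast
  then obtain q where q: "q \<in> U - S'" "\<forall>w\<in>U - S'. F (insert w S') \<le> F (insert q S')"
    using finite_ex_max_image[of "U - S'" "\<lambda>w. F (insert w S')"] fin_U by blast
  have "opt_subset rv u a U k (insert q S')"
    using opt_subset_insert_argmax[OF fin_U assms(1)[folded U_def] opt_S' q] k_pos by simp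
  then obtain r where r: "r \<in> U - insert q S'" "F T \<le> F (insert r (insert q S'))"
    using assms(1) T_sub_U card_T unfolding exchange_prop_def U_def by blast
  obtain h where h: "h \<in> {q, r}" "F (insert r (insert q S')) \<le> F (insert e (insert h S'))"
  proof (rule bexE[OF EU_set_exchange_pair[of S' e q r a u rv]])
    show "\<forall>y\<in>S' \<union> {q, r}. 0 \<le> a y \<and> a y \<le> 1 \<and> u y \<le> u e"
      using q(1) r(1) S_sub S_eq bounds e_max by (auto simp: U_def)
    show "F (insert q S') \<le> F (insert e S')" "F (insert r S') \<le> F (insert e S')"
      using below_S q(1) r(1) S_eq by auto
  qed (use fin_S' S_eq q(1) r(1) bounds e_in in \<open>auto simp: U_def\<close>)
  have "insert e (insert h S') = insert h S" using S_eq by blast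
  then have "F T \<le> F (insert h S)" using order_trans[OF r(2) h(2)] by simp
  moreover have "h \<in> A - S" using h(1) q(1) r(1) S_eq by (auto simp: U_def)
  ultimately show ?thesis by blast
qed

end

lemma exchange_prop_finite:
  assumes "finite U" "\<forall>y\<in>U. 0 \<le> a y \<and> a y \<le> 1"
  shows "exchange_prop rv u a U"
  using assms
proof (induction U rule: finite_remove_induct)
  case empty
  show ?case by (simp add: exchange_prop_def)
next
  case (remove A)
  obtain e where e: "e \<in> A" "\<forall>y\<in>A. u y \<le> u e"
    using finite_ex_max_image[OF remove.hyps(1,2)] by blast
  have IH: "exchange_prop rv u a (A - {e})"
    using remove.IH[OF e(1)] remove.prems by blast
  show ?case
    unfolding exchange_prop_def
  proof (intro allI impI)
    fix k S T
    assume "opt_subset rv u a A k S" "T \<subseteq> A" "card T = Suc k"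
    note top = remove.hyps(1) e remove.prems this
    consider "e \<notin> S" | "e \<in> S" "a e = 1" | "e \<in> S" "a e < 1" "e \<in> T" | "e \<in> S" "a e < 1" "e \<notin> T"
      using remove.prems e(1) by fastforce
    then show "\<exists>w\<in>A - S. EU_set rv u a T \<le> EU_set rv u a (insert w S)"
      by cases (use exchange_if_top_notin_S[OF top IH] exchange_if_top_certain[OF top]
          exchange_if_top_in_S_and_T[OF top IH] exchange_if_top_in_S_notin_T[OF top IH] in blast)+
  qed
qed

lemma mia_run_opt_subset:
  assumes "finite \<Omega>" "\<forall>\<omega>\<in>\<Omega>. 0 \<le> a \<omega> \<and> a \<omega> \<le> 1" "mia_run \<Omega> u a rv D xs" "k \<le> D"
  shows "opt_subset rv u a \<Omega> k (set (take k xs))"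
  using assms(4)
proof (induction k)
  case 0
  have "R = {}" if "R \<subseteq> \<Omega>" "card R = 0" for R
    using that assms(1) by (meson card_0_eq finite_subset)
  then show ?case by (auto simp: opt_subset_def)
next
  case (Suc k)
  let ?S = "set (take k xs)"
  have "k < D" "length xs = D" using Suc.prems assms(3) by (auto simp: mia_run_def)
  then have "set (take (Suc k) xs) = insert (xs ! k) ?S"
    by (simp add: take_Suc_conv_app_nth)
  moreover have "xs ! k \<in> \<Omega> - ?S"
    and "\<forall>\<omega>\<in>\<Omega> - ?S. EU_set rv u a (insert \<omega> ?S) \<le> EU_set rv u a (insert (xs ! k) ?S)"
    using assms(3) \<open>k < D\<close> unfolding mia_run_def EU_set_def by auto
  ultimately show ?case
    using opt_subset_insert_argmax[OF assms(1) exchange_prop_finite[OF assms(1,2)]] Suc by simp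
qed

theorem theorem1:
  fixes \<Omega> :: "'a::linorder set" and u a :: "'a \<Rightarrow> real" and rv :: real and D :: nat
    and xs :: "'a list"
  assumes "finite \<Omega>"
    and "\<forall>\<omega>\<in>\<Omega>. 0 \<le> u \<omega> \<and> u \<omega> \<le> 1"
    and "\<forall>\<omega>\<in>\<Omega>. 0 \<le> a \<omega> \<and> a \<omega> \<le> 1"
    and "0 < D" and "D \<le> card \<Omega>"
    and "mia_run \<Omega> u a rv D xs"
  shows "length (sort_dec u (set xs)) = D \<and> set (sort_dec u (set xs)) \<subseteq> \<Omega> \<and>
         (\<forall>\<pi>. length \<pi> = D \<and> set \<pi> \<subseteq> \<Omega> \<and> distinct \<pi> \<longrightarrow>
              EU rv u a \<pi> \<le> EU rv u a (sort_dec u (set xs)))"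
proof -
  have "length xs = D" using assms(6) by (simp add: mia_run_def)
  then have opt: "opt_subset rv u a \<Omega> D (set xs)"
    using mia_run_opt_subset[OF assms(1,3,6), of D] by simp
  have "EU rv u a \<pi> \<le> EU rv u a (sort_dec u (set xs))"
    if "length \<pi> = D" "set \<pi> \<subseteq> \<Omega>" "distinct \<pi>" for \<pi>
  proof -
    have "EU rv u a \<pi> \<le> EU rv u a (sort_key (\<lambda>y. - u y) \<pi>)"
      using that assms(3) by (intro EU_le_EU_sort_key) auto
    also have "\<dots> = EU_set rv u a (set \<pi>)"
      using that(3) by (rule EU_set_eq_EU_sort_key[symmetric])
    also have "\<dots> \<le> EU_set rv u a (set xs)"
      using opt that by (simp add: opt_subset_def distinct_card)
    finally show ?thesis by (simp add: EU_set_def)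
  qed
  then show ?thesis
    using opt by (simp add: opt_subset_def)
qed

end
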